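(* For every integer $n\ge 2$ and every real $x>0$, $$\bigl(\psi_2^{(n)}(x+1)\bigr)^2\le \psi_2^{(n)}(x)\,\psi_2^{(n)}(x+2).$$
   Context: For an integer $n\ge 2$ and $x>0$, the poly-double gamma function is defined by $$\psi_2^{(n)}(x)=(-1)^{n+1}\,n!\sum_{k=0}^{\infty}\frac{1+k}{(x+k)^{n+1}} .$$ *)

theory Defs
  imports Complex_Main
begin

definition poly_double_gamma :: "nat \<Rightarrow> real \<Rightarrow> real" where
  "poly_double_gamma n x =
     (-1) ^ (n + 1) * fact n * (\<Sum>k. (1 + real k) / (x + real k) ^ (n + 1))"

end

theory Submission
  imports Defs "HOL-Analysis.Analysis"
begin

text \<open>Each term \<open>(1 + k) / (x + k) ^ m\<close> is log-convex along integer steps, because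
  \<open>(x + k) (x + k + 2) \<le> (x + k + 1)\<^sup>2\<close>; the Cauchy-Schwarz inequality carries the termwise
  inequality \<open>a\<^sub>k\<^sup>2 \<le> b\<^sub>k c\<^sub>k\<close> over to the sums, and the constant factor
  \<open>(-1) ^ (n + 1) * n!\<close> enters both sides squared.\<close>

lemma sum_squared_le_sum_mult_sum:
  fixes a b c :: "'a \<Rightarrow> real"
  assumes "\<And>i. i \<in> I \<Longrightarrow> 0 \<le> a i" "\<And>i. i \<in> I \<Longrightarrow> 0 \<le> b i" "\<And>i. i \<in> I \<Longrightarrow> 0 \<le> c i"
    and "\<And>i. i \<in> I \<Longrightarrow> (a i)\<^sup>2 \<le> b i * c i"
  shows "(\<Sum>i\<in>I. a i)\<^sup>2 \<le> (\<Sum>i\<in>I. b i) * (\<Sum>i\<in>I. c i)"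
proof -
  have "a i \<le> sqrt (b i) * sqrt (c i)" if "i \<in> I" for i
    using assms that by (simp add: real_le_rsqrt flip: real_sqrt_mult)
  then have "(\<Sum>i\<in>I. a i)\<^sup>2 \<le> (\<Sum>i\<in>I. sqrt (b i) * sqrt (c i))\<^sup>2"
    using assms(1) by (intro power_mono sum_mono sum_nonneg) auto
  also have "\<dots> \<le> (\<Sum>i\<in>I. (sqrt (b i))\<^sup>2) * (\<Sum>i\<in>I. (sqrt (c i))\<^sup>2)"
    by (rule Cauchy_Schwarz_ineq_sum)
  also have "\<dots> = (\<Sum>i\<in>I. b i) * (\<Sum>i\<in>I. c i)"
    using assms(2,3) by (simp cong: sum.cong)
  finally show ?thesis .
qed

lemma suminf_squared_le_suminf_mult_suminf:
  fixes a b c :: "nat \<Rightarrow> real"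
  assumes "\<And>k. 0 \<le> a k" "\<And>k. 0 \<le> b k" "\<And>k. 0 \<le> c k" "\<And>k. (a k)\<^sup>2 \<le> b k * c k"
    and "summable a" "summable b" "summable c"
  shows "(suminf a)\<^sup>2 \<le> suminf b * suminf c"
proof (rule LIMSEQ_le)
  show "(\<lambda>N. (\<Sum>k<N. a k)\<^sup>2) \<longlonglongrightarrow> (suminf a)\<^sup>2"
    by (intro tendsto_power summable_LIMSEQ assms)
  show "(\<lambda>N. (\<Sum>k<N. b k) * (\<Sum>k<N. c k)) \<longlonglongrightarrow> suminf b * suminf c"
    by (intro tendsto_mult summable_LIMSEQ assms)
  show "\<exists>N. \<forall>n\<ge>N. (\<Sum>k<n. a k)\<^sup>2 \<le> (\<Sum>k<n. b k) * (\<Sum>k<n. c k)"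
    using assms(1-4) by (intro exI[of _ 0] allI impI sum_squared_le_sum_mult_sum)
qed

lemma power_mult_shift_le_power_squared:
  fixes u :: real
  assumes "0 \<le> u"
  shows "u ^ m * (u + 2) ^ m \<le> ((u + 1) ^ m)\<^sup>2"
proof -
  have "u ^ m * (u + 2) ^ m = (u * (u + 2)) ^ m"
    by (simp add: power_mult_distrib)
  also have "\<dots> \<le> ((u + 1)\<^sup>2) ^ m"
    using assms by (intro power_mono) (simp_all add: power2_eq_square algebra_simps)
  also have "\<dots> = ((u + 1) ^ m)\<^sup>2"
    by (simp flip: power_mult add: mult.commute)
  finally show ?thesis .
qed

lemma divide_power_shift_squared_le:
  fixes u w :: real
  assumes "0 < u"
  shows "(w / (u + 1) ^ m)\<^sup>2 \<le> w / u ^ m * (w / (u + 2) ^ m)"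
proof -
  have "(w / (u + 1) ^ m)\<^sup>2 = w\<^sup>2 / ((u + 1) ^ m)\<^sup>2"
    by (simp add: power_divide)
  also have "\<dots> \<le> w\<^sup>2 / (u ^ m * (u + 2) ^ m)"
    using assms power_mult_shift_le_power_squared[of u m]
    by (intro divide_left_mono) auto
  also have "\<dots> = w / u ^ m * (w / (u + 2) ^ m)"
    by (simp add: power2_eq_square)
  finally show ?thesis .
qed

lemma summable_linear_over_power:
  fixes y :: real
  assumes "0 < y" "3 \<le> m"
  shows "summable (\<lambda>k. (1 + real k) / (y + real k) ^ m)"
proof (rule summable_comparison_test')
  show "summable (\<lambda>k. 2 * inverse (real k ^ (m - 1)))"
    using assms(2) by (intro summable_mult inverse_power_summable) simp
  fix k :: nat
  assume "1 \<le> k"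
  have "(1 + real k) / (y + real k) ^ m \<le> (2 * real k) / real k ^ m"
    using assms \<open>1 \<le> k\<close> by (intro frac_le power_mono) auto
  also have "\<dots> = 2 * inverse (real k ^ (m - 1))"
    using assms(2) \<open>1 \<le> k\<close> by (simp add: power_eq_if divide_inverse)
  finally show "norm ((1 + real k) / (y + real k) ^ m) \<le> 2 * inverse (real k ^ (m - 1))"
    using assms by simp
qed

lemma suminf_linear_over_power_log_convex:
  fixes x :: real
  assumes "0 < x" "3 \<le> m"
  shows "(\<Sum>k. (1 + real k) / (x + 1 + real k) ^ m)\<^sup>2
    \<le> (\<Sum>k. (1 + real k) / (x + real k) ^ m) * (\<Sum>k. (1 + real k) / (x + 2 + real k) ^ m)"
proof (rule suminf_squared_le_suminf_mult_suminf)
  fix k :: nat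
  show "((1 + real k) / (x + 1 + real k) ^ m)\<^sup>2
    \<le> (1 + real k) / (x + real k) ^ m * ((1 + real k) / (x + 2 + real k) ^ m)"
    using divide_power_shift_squared_le[of "x + real k" "1 + real k" m] assms
    by (simp add: add_ac)
qed (use assms in \<open>simp_all add: summable_linear_over_power\<close>)

theorem corollary2p2:
  fixes n :: nat and x :: real
  assumes "n \<ge> 2" and "x > 0"
  shows "(poly_double_gamma n (x + 1))\<^sup>2 \<le> poly_double_gamma n x * poly_double_gamma n (x + 2)"
proof -
  define S where "S y = (\<Sum>k. (1 + real k) / (y + real k) ^ (n + 1))" for y
  define c :: real where "c = (-1) ^ (n + 1) * fact n"
  have pdg: "poly_double_gamma n y = c * S y" for y
    unfolding poly_double_gamma_def S_def c_def ..
  have "(poly_double_gamma n (x + 1))\<^sup>2 = c\<^sup>2 * (S (x + 1))\<^sup>2"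
    by (simp add: pdg power_mult_distrib)
  also have "\<dots> \<le> c\<^sup>2 * (S x * S (x + 2))"
    using assms unfolding S_def
    by (intro mult_left_mono suminf_linear_over_power_log_convex) auto
  also have "\<dots> = poly_double_gamma n x * poly_double_gamma n (x + 2)"
    by (simp add: pdg power2_eq_square)
  finally show ?thesis .
qed

end
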